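(* Let $x^*$, $\Delta x$, $S^k$, $L_{s,k}f$, $\beta_k$ and $\zeta$ be as defined in the context, with $f\in C^4(I)$ on an open interval $I$ containing all stencil points for small $\Delta x$. Let $d_0=\frac{1}{35}$, $d_1=\frac{12}{35}$, $d_2=\frac{18}{35}$, $d_3=\frac{4}{35}$, let $s\geq 1$ be an integer, and (taking $\epsilon=0$) define the nonlinear weights $$\omega_k=\frac{\alpha_k}{\sum_{q=0}^3\alpha_q},\qquad \alpha_k=d_k\left[1+\left(\frac{\zeta}{\beta_k^2}\right)^{s}\right],\qquad k=0,1,2,3.$$ Then, as $\Delta x\to 0$ (for $\Delta x$ small enough that all $\beta_k>0$ in the cases below): (i) if $f'(x^* )\neq 0$, then $\omega_k=d_k+O(\Delta x^{6s})$; (ii) if $f'(x^* )=0$ and $f''(x^* )\neq0$, then $\omega_k=d_k+O(\Delta x^{4s})$; (iii) if $f'(x^* )=f''(x^* )=0$ and $f'''(x^* )\neq 0$, then $\omega_k=d_k+O(\Delta x^{2s})$. Consequently the condition $\omega_k-d_k=O(\Delta x^4)$ for $k=0,1,2,3$ holds for every $s\ge1$ in cases (i) and (ii), and for every $s\geq 2$ in case (iii).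
   Context: Setup: $x^*\in\mathbb{R}$, $\Delta x>0$, $S^k=\{x^*+(k+i-\tfrac{7}{2})\Delta x : i=0,1,2,3\}$ for $k=0,1,2,3$ (the four 4-point sub-stencils $\{x_{j+k-3},\dots,x_{j+k}\}$ of a uniform grid, with $x^*=x_{j+\frac12}$). For $s'\in\{1,2,3\}$, $L_{s',k}f:=\sum_{x_l\in S^k}c^{[s']}_{k,l}f(x_l)$ where the coefficients uniquely solve $\sum_{x_l\in S^k}c^{[s']}_{k,l}\frac{(x_l-x^* )^m}{m!}=\Delta x^{s'}\delta_{s',m}$ for $m=0,1,2,3$. With fixed parameters $\xi_1,\xi_2\in(0,1]$, $\beta_k=\xi_1|L_{1,k}f|+\xi_2|L_{2,k}f|+|L_{3,k}f|$ and $\zeta=|\beta_0-\beta_3|^2$. The numbers $d_k$ are the ideal (linear) weights of the seventh-order upstream central reconstruction. *)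

theory Defs
  imports "HOL-Analysis.Analysis" "HOL-Library.Landau_Symbols"
begin

definition stencil_pt :: "real \<Rightarrow> real \<Rightarrow> nat \<Rightarrow> nat \<Rightarrow> real" where
  "stencil_pt xs dx k i = xs + (real k + real i - 7/2) * dx"

definition stencil_coef :: "real \<Rightarrow> real \<Rightarrow> nat \<Rightarrow> nat \<Rightarrow> nat \<Rightarrow> real" where
  "stencil_coef xs dx s k = (THE c. (\<forall>i\<ge>4. c i = 0) \<and>
     (\<forall>m<4. (\<Sum>i<4. c i * (stencil_pt xs dx k i - xs) ^ m / fact m)
              = dx ^ s * (if s = m then 1 else 0)))"

definition Lop :: "real \<Rightarrow> real \<Rightarrow> nat \<Rightarrow> nat \<Rightarrow> (real \<Rightarrow> real) \<Rightarrow> real" where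
  "Lop xs dx s k f = (\<Sum>i<4. stencil_coef xs dx s k i * f (stencil_pt xs dx k i))"

definition beta_ind :: "real \<Rightarrow> real \<Rightarrow> real \<Rightarrow> real \<Rightarrow> (real \<Rightarrow> real) \<Rightarrow> nat \<Rightarrow> real" where
  "beta_ind xi1 xi2 xs dx f k =
     xi1 * \<bar>Lop xs dx 1 k f\<bar> + xi2 * \<bar>Lop xs dx 2 k f\<bar> + \<bar>Lop xs dx 3 k f\<bar>"

definition zeta_ind :: "real \<Rightarrow> real \<Rightarrow> real \<Rightarrow> real \<Rightarrow> (real \<Rightarrow> real) \<Rightarrow> real" where
  "zeta_ind xi1 xi2 xs dx f = \<bar>beta_ind xi1 xi2 xs dx f 0 - beta_ind xi1 xi2 xs dx f 3\<bar> ^ 2"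

definition dw :: "nat \<Rightarrow> real" where
  "dw k = (if k = 0 then 1/35 else if k = 1 then 12/35 else if k = 2 then 18/35 else 4/35)"

definition alpha_w :: "nat \<Rightarrow> real \<Rightarrow> real \<Rightarrow> real \<Rightarrow> real \<Rightarrow> (real \<Rightarrow> real) \<Rightarrow> nat \<Rightarrow> real" where
  "alpha_w s xi1 xi2 xs dx f k =
     dw k * (1 + (zeta_ind xi1 xi2 xs dx f / (beta_ind xi1 xi2 xs dx f k) ^ 2) ^ s)"

definition omega_w :: "nat \<Rightarrow> real \<Rightarrow> real \<Rightarrow> real \<Rightarrow> real \<Rightarrow> (real \<Rightarrow> real) \<Rightarrow> nat \<Rightarrow> real" where
  "omega_w s xi1 xi2 xs dx f k =
     alpha_w s xi1 xi2 xs dx f k / (\<Sum>q<4. alpha_w s xi1 xi2 xs dx f q)"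

end

theory Submission
  imports Defs "HOL-Computational_Algebra.Polynomial"
begin

text \<open>On the sub-stencil \<open>S\<^sup>k\<close> the operator \<open>L_{s',k}\<close> annihilates every polynomial of degree at
  most 3 except the monomial of degree \<open>s'\<close>, so a fourth-order Taylor expansion gives
  \<open>L_{s',k} f = \<Delta>x^s' f^(s')(x*) + O(\<Delta>x^4)\<close>, with a leading term that does not depend on \<open>k\<close>.
  Hence all \<open>\<beta>_k\<close> agree up to \<open>O(\<Delta>x^4)\<close> with a common value bounded below by a multiple
  of \<open>\<Delta>x^p\<close>, \<open>p\<close> being the order of the first non-vanishing derivative. So \<open>\<zeta> = O(\<Delta>x^8)\<close> and
  \<open>\<zeta>/\<beta>_k^2 = O(\<Delta>x^(8-2p))\<close>; since normalising the weights \<open>d_k (1 + \<tau>_k)\<close> with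
  \<open>0 \<le> \<tau>_k \<le> T\<close> moves each of them by at most \<open>T\<close>, \<open>\<omega>_k - d_k = O(\<Delta>x^((8-2p)s))\<close>.\<close>

lemma poly_eq_sum_below_degree:
  fixes p :: "'a::comm_semiring_1 poly"
  assumes "degree p < n"
  shows "poly p x = (\<Sum>m<n. coeff p m * x ^ m)"
proof -
  have "poly p x = (\<Sum>m\<le>degree p. coeff p m * x ^ m)" by (rule poly_altdef)
  also have "\<dots> = (\<Sum>m<n. coeff p m * x ^ m)"
    using assms by (intro sum.mono_neutral_left) (auto simp: coeff_eq_0)
  finally show ?thesis .
qed

lemma vandermonde_kernel_trivial:
  fixes t d :: "nat \<Rightarrow> 'a::field"
  assumes inj: "inj_on t {..<n}"
    and moments: "\<And>m. m < n \<Longrightarrow> (\<Sum>i<n. d i * t i ^ m) = 0"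
    and j: "j < n"
  shows "d j = 0"
proof -
  define p where "p = (\<Prod>i\<in>{..<n} - {j}. [:- t i, 1:])"
  have "degree p \<le> (\<Sum>i\<in>{..<n} - {j}. 1)"
    unfolding p_def by (rule order.trans[OF degree_prod_sum_le]) auto
  then have deg: "degree p < n" using j by simp
  have root: "poly p (t i) = 0" if "i < n" "i \<noteq> j" for i
    using that by (force simp: p_def poly_prod)
  have "d j * poly p (t j) = (\<Sum>i<n. d i * poly p (t i))"
    using j root by (subst sum.remove[of _ j]) auto
  also have "\<dots> = (\<Sum>m<n. coeff p m * (\<Sum>i<n. d i * t i ^ m))"
    unfolding poly_eq_sum_below_degree[OF deg] sum_distrib_left
    by (subst sum.swap) (simp add: mult_ac)
  also have "\<dots> = 0" using moments by simp
  finally have "d j * poly p (t j) = 0" .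
  moreover have "poly p (t j) \<noteq> 0"
    using inj j by (auto simp: p_def poly_prod inj_on_def)
  ultimately show ?thesis by simp
qed

definition stencil_offset :: "nat \<Rightarrow> nat \<Rightarrow> real" where
  "stencil_offset k i = real k + real i - 7/2"

lemma stencil_pt_eq: "stencil_pt xs dx k i = xs + stencil_offset k i * dx"
  by (simp add: stencil_pt_def stencil_offset_def algebra_simps)

lemma inj_on_stencil_offset: "inj_on (stencil_offset k) A"
  by (auto simp: inj_on_def stencil_offset_def)

lemma abs_stencil_offset_le:
  assumes "k < 4" "i < 4"
  shows "\<bar>stencil_offset k i\<bar> \<le> 7/2"
proof -
  have "real k \<le> 3" "real i \<le> 3" using assms by auto
  then show ?thesis unfolding stencil_offset_def abs_le_iff by simp
qed

text \<open>The coefficients \<open>c^[s']_{k,l}\<close> with the factor \<open>\<Delta>x^s'\<close> divided out, which makes them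
  independent of \<open>\<Delta>x\<close>; the table is indexed by \<open>s' - 1\<close>, the sub-stencil \<open>k\<close> and the point \<open>i\<close>.\<close>
definition weno_coef :: "nat \<Rightarrow> nat \<Rightarrow> nat \<Rightarrow> real" where
  "weno_coef s k i = (if i < 4 then
     [[[-23/24, 31/8, -47/8, 71/24], [1/24, -1/8, -7/8, 23/24],
       [1/24, -9/8, 9/8, -1/24], [-23/24, 7/8, 1/8, -1/24]],
      [[-3/2, 11/2, -13/2, 5/2], [-1/2, 5/2, -7/2, 3/2],
       [1/2, -1/2, -1/2, 1/2], [3/2, -7/2, 5/2, -1/2]],
      [[-1, 3, -3, 1], [-1, 3, -3, 1], [-1, 3, -3, 1], [-1, 3, -3, 1]]] ! (s - 1) ! k ! i
   else 0)"

lemma weno_coef_moments: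
  assumes "s \<in> {1, 2, 3}" "k < 4" "m < 4"
  shows "(\<Sum>i<4. weno_coef s k i * stencil_offset k i ^ m) = (if s = m then fact m else 0)"
proof -
  have "k \<in> {0, 1, 2, 3}" "m \<in> {0, 1, 2, 3}" using assms(2,3) by auto
  with assms(1) show ?thesis
    by (auto simp: weno_coef_def stencil_offset_def eval_nat_numeral fact_numeral)
qed

lemma abs_weno_coef_le:
  assumes "s \<in> {1, 2, 3}" "k < 4"
  shows "\<bar>weno_coef s k i\<bar> \<le> 7"
proof (cases "i < 4")
  case True
  then have "k \<in> {0, 1, 2, 3}" "i \<in> {0, 1, 2, 3}" using assms(2) by auto
  with assms(1) show ?thesis by (auto simp: weno_coef_def)
qed (simp add: weno_coef_def)

lemma stencil_moment_iff:
  assumes "0 < dx"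
  shows "(\<Sum>i<4. c i * (stencil_pt xs dx k i - xs) ^ m / fact m) = dx ^ s * (if s = m then 1 else 0)
     \<longleftrightarrow> (\<Sum>i<4. c i * stencil_offset k i ^ m) = (if s = m then fact m else 0)"
proof -
  have "(\<Sum>i<4. c i * (stencil_pt xs dx k i - xs) ^ m / fact m)
      = dx ^ m / fact m * (\<Sum>i<4. c i * stencil_offset k i ^ m)"
    by (simp add: stencil_pt_eq power_mult_distrib sum_distrib_left sum_divide_distrib mult_ac)
  then show ?thesis using assms by (auto simp: field_simps)
qed

lemma stencil_coef_eq:
  assumes "0 < dx" "s \<in> {1, 2, 3}" "k < 4"
  shows "stencil_coef xs dx s k = weno_coef s k"
  unfolding stencil_coef_def stencil_moment_iff[OF assms(1)]
proof (rule the_equality)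
  show "(\<forall>i\<ge>4. weno_coef s k i = 0) \<and>
      (\<forall>m<4. (\<Sum>i<4. weno_coef s k i * stencil_offset k i ^ m) = (if s = m then fact m else 0))"
    using weno_coef_moments[OF assms(2,3)] by (simp add: weno_coef_def)
  fix c
  assume c: "(\<forall>i\<ge>4. c i = 0) \<and>
      (\<forall>m<4. (\<Sum>i<4. c i * stencil_offset k i ^ m) = (if s = m then fact m else 0))"
  have "c i - weno_coef s k i = 0" if "i < 4" for i
  proof (rule vandermonde_kernel_trivial[OF inj_on_stencil_offset _ that])
    fix m :: nat
    assume "m < 4"
    then show "(\<Sum>i<4. (c i - weno_coef s k i) * stencil_offset k i ^ m) = 0"
      using c weno_coef_moments[OF assms(2,3)] by (simp add: left_diff_distrib sum_subtractf)
  qed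
  with c show "c = weno_coef s k"
    by (auto simp: fun_eq_iff weno_coef_def not_less)
qed

definition taylor_rem :: "(nat \<Rightarrow> real \<Rightarrow> real) \<Rightarrow> nat \<Rightarrow> real \<Rightarrow> real \<Rightarrow> real" where
  "taylor_rem D n x0 h = D 0 (x0 + h) - (\<Sum>m<n. D m x0 / fact m * h ^ m)"

lemma abs_taylor_rem_le:
  fixes D :: "nat \<Rightarrow> real \<Rightarrow> real"
  assumes deriv: "\<And>m t. m < n \<Longrightarrow> t \<in> {x0 - r..x0 + r} \<Longrightarrow> (D m has_real_derivative D (Suc m) t) (at t)"
    and bound: "\<And>t. t \<in> {x0 - r..x0 + r} \<Longrightarrow> \<bar>D n t\<bar> \<le> M"
    and n: "0 < n" and h: "\<bar>h\<bar> \<le> r"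
  shows "\<bar>taylor_rem D n x0 h\<bar> \<le> M / fact n * \<bar>h\<bar> ^ n"
proof (cases "h = 0")
  case True
  with n show ?thesis by (cases n) (simp_all add: taylor_rem_def sum.lessThan_Suc_shift)
next
  case False
  have "0 \<le> r" using h by linarith
  obtain t where t: "if x0 + h < x0 then x0 + h < t \<and> t < x0 else x0 < t \<and> t < x0 + h"
    and eq: "D 0 (x0 + h) = (\<Sum>m<n. D m x0 / fact m * (x0 + h - x0) ^ m) + D n t / fact n * (x0 + h - x0) ^ n"
    using Taylor[of n D "D 0" "x0 - r" "x0 + r" x0 "x0 + h"] deriv n False h \<open>0 \<le> r\<close>
    by (auto simp: abs_le_iff)
  have "t \<in> {x0 - r..x0 + r}" using t h by (auto split: if_splits simp: abs_le_iff)
  then have "\<bar>D n t\<bar> \<le> M" by (rule bound)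
  moreover have "taylor_rem D n x0 h = D n t / fact n * h ^ n"
    using eq by (simp add: taylor_rem_def)
  ultimately show ?thesis
    by (simp add: abs_mult power_abs divide_right_mono mult_right_mono)
qed

lemma Lop_eq_derivative_plus_taylor_rems:
  assumes "0 < dx" "s \<in> {1, 2, 3}" "k < 4"
  shows "Lop xs dx s k (D 0) = dx ^ s * D s xs
           + (\<Sum>i<4. weno_coef s k i * taylor_rem D 4 xs (stencil_offset k i * dx))"
proof -
  let ?g = "weno_coef s k" and ?t = "stencil_offset k"
  have "Lop xs dx s k (D 0) = (\<Sum>i<4. ?g i * D 0 (xs + ?t i * dx))"
    by (simp add: Lop_def stencil_coef_eq[OF assms] stencil_pt_eq)
  also have "\<dots> = (\<Sum>i<4. ?g i * (\<Sum>m<4. D m xs / fact m * (?t i * dx) ^ m))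
                 + (\<Sum>i<4. ?g i * taylor_rem D 4 xs (?t i * dx))"
    by (simp add: taylor_rem_def sum.distrib[symmetric] algebra_simps)
  also have "(\<Sum>i<4. ?g i * (\<Sum>m<4. D m xs / fact m * (?t i * dx) ^ m))
           = (\<Sum>m<4. D m xs / fact m * dx ^ m * (\<Sum>i<4. ?g i * ?t i ^ m))"
    unfolding sum_distrib_left by (subst sum.swap) (simp add: power_mult_distrib mult_ac)
  also have "\<dots> = (\<Sum>m<4. if m = s then dx ^ s * D s xs else 0)"
    using weno_coef_moments[OF assms(2,3)] by (intro sum.cong) auto
  also have "\<dots> = dx ^ s * D s xs" using assms(2) by auto
  finally show ?thesis .
qed

lemma abs_Lop_minus_derivative_le:
  fixes D :: "nat \<Rightarrow> real \<Rightarrow> real"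
  assumes deriv: "\<And>m t. m < 4 \<Longrightarrow> t \<in> {xs - r..xs + r} \<Longrightarrow> (D m has_real_derivative D (Suc m) t) (at t)"
    and bound: "\<And>t. t \<in> {xs - r..xs + r} \<Longrightarrow> \<bar>D 4 t\<bar> \<le> M"
    and dx: "0 < dx" "7/2 * dx \<le> r" and sk: "s \<in> {1, 2, 3}" "k < 4"
  shows "\<bar>Lop xs dx s k (D 0) - dx ^ s * D s xs\<bar> \<le> 7 * M * (7/2) ^ 4 / 6 * dx ^ 4"
proof -
  have "0 \<le> M" using bound[of xs] dx by auto
  have term_le: "\<bar>weno_coef s k i * taylor_rem D 4 xs (stencil_offset k i * dx)\<bar>
                   \<le> 7 * (M / 24 * (7/2 * dx) ^ 4)" if "i < 4" for i
  proof -
    have h: "\<bar>stencil_offset k i * dx\<bar> \<le> 7/2 * dx"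
      using abs_stencil_offset_le[OF sk(2) that] dx by (simp add: abs_mult mult_right_mono)
    have "\<bar>taylor_rem D 4 xs (stencil_offset k i * dx)\<bar> \<le> M / fact 4 * \<bar>stencil_offset k i * dx\<bar> ^ 4"
      using h dx by (intro abs_taylor_rem_le[OF deriv bound]) auto
    also have "\<dots> = M / 24 * \<bar>stencil_offset k i * dx\<bar> ^ 4" by (simp add: fact_numeral)
    also have "\<dots> \<le> M / 24 * (7/2 * dx) ^ 4"
      using h \<open>0 \<le> M\<close> by (intro mult_left_mono power_mono) auto
    finally have "\<bar>taylor_rem D 4 xs (stencil_offset k i * dx)\<bar> \<le> M / 24 * (7/2 * dx) ^ 4" .
    then show ?thesis
      unfolding abs_mult using abs_weno_coef_le[OF sk] by (intro mult_mono) auto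
  qed
  have "\<bar>Lop xs dx s k (D 0) - dx ^ s * D s xs\<bar>
      = \<bar>\<Sum>i<4. weno_coef s k i * taylor_rem D 4 xs (stencil_offset k i * dx)\<bar>"
    by (simp add: Lop_eq_derivative_plus_taylor_rems[OF dx(1) sk])
  also have "\<dots> \<le> of_nat (card {..<4::nat}) * (7 * (M / 24 * (7/2 * dx) ^ 4))"
    using term_le by (intro order.trans[OF sum_abs] sum_bounded_above) auto
  also have "\<dots> = 7 * M * (7/2) ^ 4 / 6 * dx ^ 4" by (simp add: power_mult_distrib power_divide)
  finally show ?thesis .
qed

lemma abs_scaled_abs_diff_le:
  fixes w u v :: real
  assumes "0 \<le> w" "w \<le> 1" "\<bar>u - v\<bar> \<le> e"
  shows "\<bar>w * \<bar>u\<bar> - w * \<bar>v\<bar>\<bar> \<le> e"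
proof -
  have "\<bar>w * \<bar>u\<bar> - w * \<bar>v\<bar>\<bar> = w * \<bar>\<bar>u\<bar> - \<bar>v\<bar>\<bar>"
    using assms(1) by (simp add: abs_mult right_diff_distrib[symmetric])
  also have "\<dots> \<le> 1 * \<bar>u - v\<bar>"
    using assms(1,2) by (intro mult_mono abs_triangle_ineq3) auto
  finally show ?thesis using assms(3) by simp
qed

lemma abs_beta_ind_minus_leading_le:
  assumes "0 \<le> xi1" "xi1 \<le> 1" "0 \<le> xi2" "xi2 \<le> 1"
    and L: "\<And>s. s \<in> {1, 2, 3} \<Longrightarrow> \<bar>Lop xs dx s k f - l s\<bar> \<le> e"
  shows "\<bar>beta_ind xi1 xi2 xs dx f k - (xi1 * \<bar>l 1\<bar> + xi2 * \<bar>l 2\<bar> + \<bar>l 3\<bar>)\<bar> \<le> 3 * e"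
proof -
  have "\<bar>xi1 * \<bar>Lop xs dx 1 k f\<bar> - xi1 * \<bar>l 1\<bar>\<bar> \<le> e"
    using assms(1,2) L[of 1] by (intro abs_scaled_abs_diff_le) auto
  moreover have "\<bar>xi2 * \<bar>Lop xs dx 2 k f\<bar> - xi2 * \<bar>l 2\<bar>\<bar> \<le> e"
    using assms(3,4) L[of 2] by (intro abs_scaled_abs_diff_le) auto
  moreover have "\<bar>1 * \<bar>Lop xs dx 3 k f\<bar> - 1 * \<bar>l 3\<bar>\<bar> \<le> e"
    using L[of 3] by (intro abs_scaled_abs_diff_le) auto
  ultimately show ?thesis
    unfolding beta_ind_def by (simp only: abs_le_iff mult_1) linarith
qed

lemma beta_ind_near_leading:
  fixes D :: "nat \<Rightarrow> real \<Rightarrow> real"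
  assumes "a < xs" "xs < b"
    and deriv: "\<And>m x. m < 4 \<Longrightarrow> x \<in> {a<..<b} \<Longrightarrow> (D m has_real_derivative D (Suc m) x) (at x)"
    and cont: "continuous_on {a<..<b} (D 4)"
    and xi: "0 \<le> xi1" "xi1 \<le> 1" "0 \<le> xi2" "xi2 \<le> 1"
  obtains K \<delta> where "0 \<le> K" "0 < \<delta>"
    "\<And>dx k. 0 < dx \<Longrightarrow> dx \<le> \<delta> \<Longrightarrow> k < 4 \<Longrightarrow>
       \<bar>beta_ind xi1 xi2 xs dx (D 0) k
         - (xi1 * \<bar>dx * D 1 xs\<bar> + xi2 * \<bar>dx ^ 2 * D 2 xs\<bar> + \<bar>dx ^ 3 * D 3 xs\<bar>)\<bar> \<le> K * dx ^ 4"
proof -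
  define r where "r = min (xs - a) (b - xs) / 2"
  have "0 < r" "a < xs - r" "xs + r < b"
    using assms(1,2) by (auto simp: r_def min_def field_simps)
  then have sub: "{xs - r..xs + r} \<subseteq> {a<..<b}" by auto
  have "compact (D 4 ` {xs - r..xs + r})"
    using continuous_on_subset[OF cont sub] by (intro compact_continuous_image) auto
  then obtain M where M: "\<And>t. t \<in> {xs - r..xs + r} \<Longrightarrow> \<bar>D 4 t\<bar> \<le> M"
    by (metis (no_types, lifting) atLeastAtMost_iff bounded_iff compact_imp_bounded image_eqI real_norm_def)
  then have "0 \<le> M" using \<open>0 < r\<close> by force
  have deriv': "\<And>m t. m < 4 \<Longrightarrow> t \<in> {xs - r..xs + r} \<Longrightarrow> (D m has_real_derivative D (Suc m) t) (at t)"
    using deriv sub by blast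
  show ?thesis
  proof
    show "0 \<le> 3 * (7 * M * (7/2) ^ 4 / 6)" using \<open>0 \<le> M\<close> by simp
    show "0 < 2 * r / 7" using \<open>0 < r\<close> by simp
    fix dx :: real and k :: nat
    assume dx: "0 < dx" "dx \<le> 2 * r / 7" and "k < 4"
    then have "\<bar>Lop xs dx s k (D 0) - dx ^ s * D s xs\<bar> \<le> 7 * M * (7/2) ^ 4 / 6 * dx ^ 4"
      if "s \<in> {1, 2, 3}" for s
      using abs_Lop_minus_derivative_le[OF deriv' M \<open>0 < dx\<close> _ that \<open>k < 4\<close>] by simp
    from abs_beta_ind_minus_leading_le[OF xi this]
    show "\<bar>beta_ind xi1 xi2 xs dx (D 0) k
         - (xi1 * \<bar>dx * D 1 xs\<bar> + xi2 * \<bar>dx ^ 2 * D 2 xs\<bar> + \<bar>dx ^ 3 * D 3 xs\<bar>)\<bar>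
         \<le> 3 * (7 * M * (7/2) ^ 4 / 6) * dx ^ 4"
      by (simp add: mult_ac)
  qed
qed

lemma normalized_weight_deviation_le:
  fixes w \<tau> :: "'a \<Rightarrow> real"
  assumes "finite A" "k \<in> A" and w: "\<And>q. q \<in> A \<Longrightarrow> 0 \<le> w q" "sum w A = 1"
    and \<tau>: "\<And>q. q \<in> A \<Longrightarrow> 0 \<le> \<tau> q \<and> \<tau> q \<le> T"
  shows "\<bar>w k * (1 + \<tau> k) / (\<Sum>q\<in>A. w q * (1 + \<tau> q)) - w k\<bar> \<le> T"
proof -
  define S where "S = (\<Sum>q\<in>A. w q * \<tau> q)"
  have "0 \<le> S" unfolding S_def using w \<tau> by (intro sum_nonneg) auto
  have "S \<le> (\<Sum>q\<in>A. w q * T)" unfolding S_def using w \<tau> by (intro sum_mono mult_left_mono) auto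
  then have "S \<le> T" by (simp add: sum_distrib_right[symmetric] w(2))
  have "w k \<le> sum w A" using assms(1,2) w(1) by (intro member_le_sum) auto
  then have "w k \<le> 1" by (simp add: w(2))
  have "(\<Sum>q\<in>A. w q * (1 + \<tau> q)) = 1 + S"
    by (simp add: S_def algebra_simps sum.distrib w(2))
  then have "w k * (1 + \<tau> k) / (\<Sum>q\<in>A. w q * (1 + \<tau> q)) - w k = w k * (\<tau> k - S) / (1 + S)"
    using \<open>0 \<le> S\<close> by (simp add: field_simps)
  then have "\<bar>w k * (1 + \<tau> k) / (\<Sum>q\<in>A. w q * (1 + \<tau> q)) - w k\<bar> = w k * \<bar>\<tau> k - S\<bar> / (1 + S)"
    using \<open>0 \<le> S\<close> w(1)[OF assms(2)] by (simp add: abs_mult)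
  also have "\<dots> \<le> 1 * \<bar>\<tau> k - S\<bar> / 1"
    using \<open>0 \<le> S\<close> \<open>w k \<le> 1\<close> by (intro frac_le mult_right_mono) auto
  also have "\<dots> \<le> T" using \<tau>[OF assms(2)] \<open>0 \<le> S\<close> \<open>S \<le> T\<close> by auto
  finally show ?thesis .
qed

lemma diff_sq_div_sq_le_of_near:
  fixes b :: "nat \<Rightarrow> real"
  assumes "\<bar>b i - B\<bar> \<le> e" "\<bar>b j - B\<bar> \<le> e" "\<bar>b k - B\<bar> \<le> e" "2 * e \<le> B" "0 < B"
  shows "\<bar>b i - b j\<bar> ^ 2 / (b k) ^ 2 \<le> 16 * e ^ 2 / B ^ 2"
proof -
  have "\<bar>b i - b j\<bar> \<le> 2 * e" using assms(1,2) by (simp only: abs_le_iff) linarith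
  moreover have "B / 2 \<le> b k" using assms(3,4) by (simp only: abs_le_iff) linarith
  ultimately have "\<bar>b i - b j\<bar> ^ 2 / (b k) ^ 2 \<le> (2 * e) ^ 2 / (B / 2) ^ 2"
    using assms(5) by (intro frac_le power_mono) auto
  then show ?thesis by (simp add: power_mult_distrib power_divide)
qed

lemma eventually_mult_pow_le_at_right_0:
  fixes K c :: real
  assumes "p < q" "0 < c"
  shows "eventually (\<lambda>x. K * x ^ q \<le> c * x ^ p) (at_right 0)"
proof -
  have "((\<lambda>x. K * x ^ (q - p)) \<longlongrightarrow> K * 0 ^ (q - p)) (at_right 0)"
    by (intro tendsto_intros)
  moreover have "K * 0 ^ (q - p) = (0::real)" using assms(1) by simp
  ultimately have "((\<lambda>x. K * x ^ (q - p)) \<longlongrightarrow> 0) (at_right 0)" by simp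
  then have "eventually (\<lambda>x. K * x ^ (q - p) < c) (at_right 0)"
    using assms by (intro order_tendstoD) auto
  with eventually_at_right_less show ?thesis
  proof eventually_elim
    case (elim x)
    have "K * x ^ q = K * x ^ (q - p) * x ^ p"
      using assms(1) by (simp add: power_add[symmetric])
    also have "\<dots> \<le> c * x ^ p" using elim by (intro mult_right_mono) auto
    finally show ?case .
  qed
qed

lemma power_bigo_power_at_right_0:
  assumes "m \<le> n"
  shows "(\<lambda>x::real. x ^ n) \<in> O[at_right 0](\<lambda>x. x ^ m)"
proof (rule bigoI[where c = 1])
  have "eventually (\<lambda>x. x \<in> {0<..<1}) (at_right (0::real))"
    by (rule eventually_at_right_real) simp
  then show "eventually (\<lambda>x. norm (x ^ n) \<le> 1 * norm (x ^ m)) (at_right (0::real))"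
    by eventually_elim (use assms in \<open>auto intro: power_decreasing\<close>)
qed

lemma sum_dw: "(\<Sum>q<4. dw q) = 1"
  by (simp add: dw_def eval_nat_numeral)

lemma dw_nonneg: "0 \<le> dw q"
  by (simp add: dw_def)

lemma omega_w_deviation_bigo:
  assumes "0 < \<delta>" "0 \<le> K" "0 < c" "p < 4"
    and near: "\<And>dx k. 0 < dx \<Longrightarrow> dx \<le> \<delta> \<Longrightarrow> k < 4 \<Longrightarrow> \<bar>beta_ind xi1 xi2 xs dx f k - B dx\<bar> \<le> K * dx ^ 4"
    and lower: "\<And>dx. 0 < dx \<Longrightarrow> c * dx ^ p \<le> B dx"
    and "k < 4"
  shows "(\<lambda>dx. omega_w s xi1 xi2 xs dx f k - dw k) \<in> O[at_right 0](\<lambda>dx. dx ^ ((8 - 2 * p) * s))"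
proof (rule bigoI[where c = "(16 * K ^ 2 / c ^ 2) ^ s"])
  have "eventually (\<lambda>dx. dx \<in> {0<..<\<delta>}) (at_right 0)"
    using \<open>0 < \<delta>\<close> by (rule eventually_at_right_real)
  moreover have "eventually (\<lambda>dx. 2 * K * dx ^ 4 \<le> c * dx ^ p) (at_right 0)"
    using assms(4,3) by (rule eventually_mult_pow_le_at_right_0)
  ultimately show "eventually (\<lambda>dx. norm (omega_w s xi1 xi2 xs dx f k - dw k)
                     \<le> (16 * K ^ 2 / c ^ 2) ^ s * norm (dx ^ ((8 - 2 * p) * s))) (at_right 0)"
  proof eventually_elim
    case (elim dx)
    then have dx: "0 < dx" "dx \<le> \<delta>" by auto
    let ?\<beta> = "beta_ind xi1 xi2 xs dx f"
    have cB: "c * dx ^ p \<le> B dx" "0 < c * dx ^ p" using lower[OF dx(1)] dx(1) \<open>0 < c\<close> by simp_all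
    then have "0 < B dx" by linarith
    have ratio: "zeta_ind xi1 xi2 xs dx f / (?\<beta> q) ^ 2 \<le> 16 * K ^ 2 / c ^ 2 * dx ^ (8 - 2 * p)"
      if "q < 4" for q
    proof -
      have "zeta_ind xi1 xi2 xs dx f / (?\<beta> q) ^ 2 \<le> 16 * (K * dx ^ 4) ^ 2 / (B dx) ^ 2"
        unfolding zeta_ind_def using near[OF dx] elim cB \<open>q < 4\<close>
        by (intro diff_sq_div_sq_le_of_near) auto
      also have "\<dots> \<le> 16 * (K * dx ^ 4) ^ 2 / (c * dx ^ p) ^ 2"
        using cB dx \<open>0 < c\<close> \<open>0 < B dx\<close>
        by (intro divide_left_mono power_mono mult_pos_pos zero_less_power) auto
      also have "\<dots> = 16 * K ^ 2 / c ^ 2 * dx ^ (8 - 2 * p)"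
      proof -
        have "dx ^ 8 = dx ^ (2 * p) * dx ^ (8 - 2 * p)"
          using \<open>p < 4\<close> by (simp add: power_add[symmetric])
        then show ?thesis
          using cB \<open>p < 4\<close> by (simp add: field_simps power_mult_distrib power_mult[symmetric])
      qed
      finally show ?thesis .
    qed
    have "\<bar>omega_w s xi1 xi2 xs dx f k - dw k\<bar> \<le> (16 * K ^ 2 / c ^ 2 * dx ^ (8 - 2 * p)) ^ s"
      unfolding omega_w_def alpha_w_def
    proof (rule normalized_weight_deviation_le)
      fix q :: nat
      assume "q \<in> {..<4}"
      then show "0 \<le> (zeta_ind xi1 xi2 xs dx f / (?\<beta> q) ^ 2) ^ s \<and>
          (zeta_ind xi1 xi2 xs dx f / (?\<beta> q) ^ 2) ^ s \<le> (16 * K ^ 2 / c ^ 2 * dx ^ (8 - 2 * p)) ^ s"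
        using ratio by (auto simp: zeta_ind_def intro: power_mono)
    qed (use \<open>k < 4\<close> sum_dw dw_nonneg in auto)
    also have "\<dots> = (16 * K ^ 2 / c ^ 2) ^ s * norm (dx ^ ((8 - 2 * p) * s))"
      using dx by (simp only: power_mult_distrib power_mult real_norm_def power_abs abs_of_pos)
    finally show ?case by (simp only: real_norm_def)
  qed
qed

theorem mainTheorem3:
  fixes f f1 f2 f3 f4 :: "real \<Rightarrow> real" and a b xs xi1 xi2 :: real and s :: nat
  assumes "a < xs" and "xs < b"
    and "\<And>x. x \<in> {a<..<b} \<Longrightarrow> (f has_real_derivative f1 x) (at x)"
    and "\<And>x. x \<in> {a<..<b} \<Longrightarrow> (f1 has_real_derivative f2 x) (at x)"
    and "\<And>x. x \<in> {a<..<b} \<Longrightarrow> (f2 has_real_derivative f3 x) (at x)"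
    and "\<And>x. x \<in> {a<..<b} \<Longrightarrow> (f3 has_real_derivative f4 x) (at x)"
    and "continuous_on {a<..<b} f4"
    and "0 < xi1" and "xi1 \<le> 1" and "0 < xi2" and "xi2 \<le> 1"
    and "1 \<le> s"
  shows
    "(f1 xs \<noteq> 0 \<longrightarrow> (\<forall>k<4.
        (\<lambda>dx. omega_w s xi1 xi2 xs dx f k - dw k) \<in> O[at_right 0](\<lambda>dx. dx ^ (6 * s)) \<and>
        (\<lambda>dx. omega_w s xi1 xi2 xs dx f k - dw k) \<in> O[at_right 0](\<lambda>dx. dx ^ 4)))
   \<and> (f1 xs = 0 \<and> f2 xs \<noteq> 0 \<longrightarrow> (\<forall>k<4.
        (\<lambda>dx. omega_w s xi1 xi2 xs dx f k - dw k) \<in> O[at_right 0](\<lambda>dx. dx ^ (4 * s)) \<and>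
        (\<lambda>dx. omega_w s xi1 xi2 xs dx f k - dw k) \<in> O[at_right 0](\<lambda>dx. dx ^ 4)))
   \<and> (f1 xs = 0 \<and> f2 xs = 0 \<and> f3 xs \<noteq> 0 \<longrightarrow> (\<forall>k<4.
        (\<lambda>dx. omega_w s xi1 xi2 xs dx f k - dw k) \<in> O[at_right 0](\<lambda>dx. dx ^ (2 * s)) \<and>
        (2 \<le> s \<longrightarrow> (\<lambda>dx. omega_w s xi1 xi2 xs dx f k - dw k) \<in> O[at_right 0](\<lambda>dx. dx ^ 4))))"
proof -
  define D where "D = (\<lambda>m. [f, f1, f2, f3, f4] ! m)"
  have D: "D 0 = f" "D 1 = f1" "D 2 = f2" "D 3 = f3" "D 4 = f4" by (simp_all add: D_def)
  have derivs: "(D m has_real_derivative D (Suc m) x) (at x)" if "m < 4" "x \<in> {a<..<b}" for m x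
    using that assms(3-6) by (auto simp: D_def less_Suc_eq numeral_eq_Suc)
  obtain K \<delta> where "0 \<le> K" "0 < \<delta>" and near: "\<And>dx k. 0 < dx \<Longrightarrow> dx \<le> \<delta> \<Longrightarrow> k < 4 \<Longrightarrow>
       \<bar>beta_ind xi1 xi2 xs dx (D 0) k
         - (xi1 * \<bar>dx * D 1 xs\<bar> + xi2 * \<bar>dx ^ 2 * D 2 xs\<bar> + \<bar>dx ^ 3 * D 3 xs\<bar>)\<bar> \<le> K * dx ^ 4"
    by (rule beta_ind_near_leading[of a xs b D xi1 xi2]) (use assms(1,2,7-11) derivs D in auto)
  note near = near[unfolded D]
  have dev: "(\<lambda>dx. omega_w s xi1 xi2 xs dx f k - dw k) \<in> O[at_right 0](\<lambda>dx. dx ^ n)"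
    if "0 < c" "p < 4" "n \<le> (8 - 2 * p) * s" "k < 4"
      and "\<And>dx. 0 < dx \<Longrightarrow>
             c * dx ^ p \<le> xi1 * \<bar>dx * f1 xs\<bar> + xi2 * \<bar>dx ^ 2 * f2 xs\<bar> + \<bar>dx ^ 3 * f3 xs\<bar>"
    for c p n k
    using landau_o.big_trans[OF omega_w_deviation_bigo[OF \<open>0 < \<delta>\<close> \<open>0 \<le> K\<close> that(1,2) near that(5,4)]
        power_bigo_power_at_right_0[OF that(3)]] .
  let ?dev = "\<lambda>k n. (\<lambda>dx. omega_w s xi1 xi2 xs dx f k - dw k) \<in> O[at_right 0](\<lambda>dx. dx ^ n)"
  have "f1 xs \<noteq> 0 \<Longrightarrow> k < 4 \<Longrightarrow> n \<le> 6 * s \<Longrightarrow> ?dev k n" for k n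
    by (rule dev[of "xi1 * \<bar>f1 xs\<bar>" 1]) (use assms(8,10) in \<open>auto simp: abs_mult\<close>)
  moreover have "f1 xs = 0 \<Longrightarrow> f2 xs \<noteq> 0 \<Longrightarrow> k < 4 \<Longrightarrow> n \<le> 4 * s \<Longrightarrow> ?dev k n" for k n
    by (rule dev[of "xi2 * \<bar>f2 xs\<bar>" 2]) (use assms(10) in \<open>auto simp: abs_mult\<close>)
  moreover have "f1 xs = 0 \<Longrightarrow> f2 xs = 0 \<Longrightarrow> f3 xs \<noteq> 0 \<Longrightarrow> k < 4 \<Longrightarrow> n \<le> 2 * s \<Longrightarrow> ?dev k n"
    for k n by (rule dev[of "\<bar>f3 xs\<bar>" 3]) (auto simp: abs_mult)
  ultimately show ?thesis using assms(12) by auto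
qed

end
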